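(* Let $G$ be a connected threshold graph of order $n\ge 4$ and size $m$ with $n-1<m<\binom{n}{2}$, let $c$ be its number of type 1 vertices, $(b_1,\ldots,b_z)$ its backwards zero position sequence, $F_1=\sum_{i=1}^z b_i^2$, and $\rho$ the spectral radius of its adjacency matrix. Then the greatest real root $\xi$ of the polynomial \[x^3-(c+1)x^2+\Big(c-\sum_{i=1}^z b_i\Big)x+\Big(c\sum_{i=1}^z b_i-F_1\Big)\] satisfies $\xi\ge 1+\rho$.
   Context: A threshold graph is a simple graph whose vertices can be ordered $v_1,\ldots,v_n$ so that for each $2\le i\le n$, $v_i$ is either adjacent to all of $v_1,\ldots,v_{i-1}$ (then $a_i=1$) or to none of them (then $a_i=0$); by convention $a_1=1$. Vertex $v_i$ is of type 1 if $a_i=1$ and of type 0 if $a_i=0$; $c$ and $z$ are the numbers of type 1 and type 0 vertices. The backwards zero position sequence $(b_1,\ldots,b_z)$ is defined by letting $b_i$ be the number of type 1 vertices appearing after the $i$-th type 0 vertex in the order $v_1,\ldots,v_n$. *)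

theory Defs
  imports "HOL-Computational_Algebra.Polynomial" "Jordan_Normal_Form.Spectral_Radius"
begin

definition simple_graph :: "nat \<Rightarrow> (nat \<Rightarrow> nat \<Rightarrow> bool) \<Rightarrow> bool" where
  "simple_graph n E \<longleftrightarrow>
     (\<forall>x y. E x y \<longrightarrow> x < n \<and> y < n) \<and> (\<forall>x y. E x y \<longrightarrow> E y x) \<and> (\<forall>x. \<not> E x x)"

definition graph_size :: "nat \<Rightarrow> (nat \<Rightarrow> nat \<Rightarrow> bool) \<Rightarrow> nat" where
  "graph_size n E = card {(x, y). x < y \<and> y < n \<and> E x y}"

definition graph_connected :: "nat \<Rightarrow> (nat \<Rightarrow> nat \<Rightarrow> bool) \<Rightarrow> bool" where
  "graph_connected n E \<longleftrightarrow> (\<forall>x<n. \<forall>y<n. E\<^sup>*\<^sup>* x y)"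

text \<open>Threshold ordering (0-indexed): v 0, ..., v (n-1) enumerates the vertices,
  a is the type sequence with the convention a 0 = True, and for 1 \<le> i < n the
  vertex v i is adjacent to all earlier vertices iff a i, and to none otherwise.\<close>
definition threshold_order ::
  "nat \<Rightarrow> (nat \<Rightarrow> nat \<Rightarrow> bool) \<Rightarrow> (nat \<Rightarrow> nat) \<Rightarrow> (nat \<Rightarrow> bool) \<Rightarrow> bool" where
  "threshold_order n E v a \<longleftrightarrow>
     bij_betw v {0..<n} {0..<n} \<and> a 0 \<and>
     (\<forall>i. 1 \<le> i \<and> i < n \<longrightarrow> (\<forall>j<i. E (v i) (v j) = a i))"

definition threshold_graph :: "nat \<Rightarrow> (nat \<Rightarrow> nat \<Rightarrow> bool) \<Rightarrow> bool" where
  "threshold_graph n E \<longleftrightarrow> simple_graph n E \<and> (\<exists>v a. threshold_order n E v a)"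

definition type1_count :: "nat \<Rightarrow> (nat \<Rightarrow> bool) \<Rightarrow> nat" where
  "type1_count n a = card {i. i < n \<and> a i}"

definition bzp :: "nat \<Rightarrow> (nat \<Rightarrow> bool) \<Rightarrow> nat \<Rightarrow> nat" where
  "bzp n a i = card {j. i < j \<and> j < n \<and> a j}"

definition bzp_sum :: "nat \<Rightarrow> (nat \<Rightarrow> bool) \<Rightarrow> nat" where
  "bzp_sum n a = (\<Sum>i\<in>{i. i < n \<and> \<not> a i}. bzp n a i)"

definition bzp_F1 :: "nat \<Rightarrow> (nat \<Rightarrow> bool) \<Rightarrow> nat" where
  "bzp_F1 n a = (\<Sum>i\<in>{i. i < n \<and> \<not> a i}. (bzp n a i)^2)"

definition adj_matrix :: "nat \<Rightarrow> (nat \<Rightarrow> nat \<Rightarrow> bool) \<Rightarrow> complex mat" where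
  "adj_matrix n E = mat n n (\<lambda>(i, j). if E i j then 1 else 0)"

definition thr_cubic :: "nat \<Rightarrow> (nat \<Rightarrow> bool) \<Rightarrow> real poly" where
  "thr_cubic n a =
     (let c = real (type1_count n a); s = real (bzp_sum n a); f = real (bzp_F1 n a)
      in [: c * s - f, c - s, - (c + 1), 1 :])"

definition greatest_real_root :: "real poly \<Rightarrow> real" where
  "greatest_real_root p = Max {x. poly p x = 0}"

end

theory Submission
  imports Defs
begin

(* Collatz-Wielandt: if A w <= t w for a positive vector w, then rho(A) <= t.  Write the cubic
   as (x - c)(x^2 - x - S) - F_1 with S = sum b_i and let x exceed its greatest root xi; then
   x^2 - x > S and (x - c)(x^2 - x - S) >= F_1.  Put t = x - 1 and beta = 1/(x^2 - x - S).  In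
   the threshold order, the type 1 vertex v_k gets weight 1 + beta B_k, where B_k is the sum of
   the b_i over the type 0 vertices before v_k, and a type 0 vertex gets the total weight of its
   neighbours (the later type 1 vertices) divided by t.  Type 0 rows then hold with equality.
   In the row of a type 1 vertex v_k, the other type 1 vertices contribute
   c + beta F_1 - (1 + beta B_k) <= t - beta B_k, because sum_k B_k = F_1, and each earlier
   type 0 vertex at most b_i (1 + beta S)/t = beta (t + 1) b_i; in total t (1 + beta B_k).
   So rho <= x - 1 for every x > xi. *)

lemma spectral_radius_le_Collatz_Wielandt:
  fixes M :: "nat \<Rightarrow> nat \<Rightarrow> real" and w :: "nat \<Rightarrow> real" and t :: real
  assumes n: "n > 0"
    and M_nonneg: "\<And>i j. i < n \<Longrightarrow> j < n \<Longrightarrow> M i j \<ge> 0"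
    and w_pos: "\<And>i. i < n \<Longrightarrow> w i > 0"
    and row_bound: "\<And>i. i < n \<Longrightarrow> (\<Sum>j<n. M i j * w j) \<le> t * w i"
  shows "spectral_radius (mat n n (\<lambda>(i, j). complex_of_real (M i j))) \<le> t"
proof -
  define A where "A = mat n n (\<lambda>(i, j). complex_of_real (M i j))"
  have A: "A \<in> carrier_mat n n" unfolding A_def by simp
  obtain ev where "ev \<in> spectrum A" and rho: "spectral_radius A = norm ev"
    using spectral_radius_mem_max(1)[OF A n] by auto
  then obtain x where "eigenvector A x ev"
    unfolding spectrum_def eigenvalue_def by auto
  with A have x: "x \<in> carrier_vec n" and "x \<noteq> 0\<^sub>v n" and Ax: "A *\<^sub>v x = ev \<cdot>\<^sub>v x"
    unfolding eigenvector_def by auto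
  then obtain i where i: "i < n" "x $ i \<noteq> 0"
    by (metis eq_vecI index_zero_vec(1,2) carrier_vecD)
  define r where "r j = norm (x $ j) / w j" for j
  obtain k where k: "k < n" and r_k: "r k = Max (r ` {..<n})"
    using Max_in[of "r ` {..<n}"] n by fastforce
  have r_max: "r j \<le> r k" if "j < n" for j
    using that unfolding r_k by simp
  have "r i > 0"
    using i w_pos[OF i(1)] unfolding r_def by simp
  then have "r k > 0"
    using r_max[OF i(1)] by simp
  have x_bound: "norm (x $ j) \<le> r k * w j" if "j < n" for j
    using r_max[OF that] w_pos[OF that] unfolding r_def by (simp add: divide_le_eq)
  have "ev * x $ k = (A *\<^sub>v x) $ k"
    using Ax k x by simp
  also have "\<dots> = (\<Sum>j<n. complex_of_real (M k j) * x $ j)"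
    using k x unfolding A_def by (simp add: scalar_prod_def lessThan_atLeast0 mult.commute)
  finally have eigen_k: "ev * x $ k = (\<Sum>j<n. complex_of_real (M k j) * x $ j)" .
  have "norm ev * (r k * w k) = norm (ev * x $ k)"
    using w_pos[OF k] unfolding r_def by (simp add: norm_mult)
  also have "\<dots> \<le> (\<Sum>j<n. M k j * norm (x $ j))"
    unfolding eigen_k using M_nonneg k
    by (auto simp: norm_mult intro!: order.trans[OF norm_sum] sum_mono)
  also have "\<dots> \<le> (\<Sum>j<n. M k j * (r k * w j))"
    using x_bound M_nonneg k by (intro sum_mono mult_left_mono) auto
  also have "\<dots> \<le> r k * (t * w k)"
    using mult_left_mono[OF row_bound[OF k], of "r k"] \<open>r k > 0\<close>
    by (simp add: sum_distrib_left algebra_simps)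
  finally show ?thesis
    using \<open>r k > 0\<close> w_pos[OF k] rho unfolding A_def by (simp add: mult.commute)
qed

lemma spectral_radius_adj_matrix_le_relabel:
  fixes w :: "nat \<Rightarrow> real"
  assumes n: "n > 0"
    and v: "bij_betw v {..<n} {..<n}"
    and E_v: "\<And>i j. i < n \<Longrightarrow> j < n \<Longrightarrow> E (v i) (v j) = R i j"
    and w_pos: "\<And>i. i < n \<Longrightarrow> w i > 0"
    and row_bound: "\<And>i. i < n \<Longrightarrow> (\<Sum>j | j < n \<and> R i j. w j) \<le> t * w i"
  shows "spectral_radius (adj_matrix n E) \<le> t"
proof -
  define u where "u = inv_into {..<n} v"
  have u: "u y < n" "v (u y) = y" if "y < n" for y
    using bij_betw_apply[OF bij_betw_inv_into[OF v]] bij_betw_inv_into_right[OF v] that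
    unfolding u_def by auto
  have "adj_matrix n E = mat n n (\<lambda>(x, y). complex_of_real (of_bool (E x y)))"
    unfolding adj_matrix_def by (intro cong_mat) auto
  also have "spectral_radius \<dots> \<le> t"
  proof (rule spectral_radius_le_Collatz_Wielandt[OF n])
    fix x assume x: "x < n"
    show "w (u x) > 0" using w_pos u(1)[OF x] .
    have "(\<Sum>y<n. of_bool (E x y) * w (u y)) = (\<Sum>j<n. of_bool (E x (v j)) * w (u (v j)))"
      by (rule sum.reindex_bij_betw[OF v, symmetric])
    also have "\<dots> = (\<Sum>j<n. of_bool (R (u x) j) * w j)"
      using E_v[OF u(1)[OF x]] u(2)[OF x] bij_betw_inv_into_left[OF v]
      by (intro sum.cong) (auto simp: u_def)
    also have "\<dots> = (\<Sum>j | j < n \<and> R (u x) j. w j)"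
      by (simp add: sum.If_cases Collect_conj_eq lessThan_def)
    also have "\<dots> \<le> t * w (u x)" using row_bound u(1)[OF x] .
    finally show "(\<Sum>y<n. of_bool (E x y) * w (u y)) \<le> t * w (u x)" .
  qed simp
  finally show ?thesis .
qed

definition threshold_adj :: "(nat \<Rightarrow> bool) \<Rightarrow> nat \<Rightarrow> nat \<Rightarrow> bool" where
  "threshold_adj a i j \<longleftrightarrow> (j < i \<and> a i) \<or> (i < j \<and> a j)"

lemma threshold_order_adj:
  assumes "simple_graph n E" "threshold_order n E v a" "i < n" "j < n"
  shows "E (v i) (v j) = threshold_adj a i j"
proof -
  have later: "E (v i) (v j) = a i" if "j < i" "i < n" for i j
    using assms(2) that unfolding threshold_order_def by auto
  have "E (v j) (v i) = E (v i) (v j)"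
    using assms(1) unfolding simple_graph_def by blast
  moreover have "\<not> E (v i) (v i)"
    using assms(1) unfolding simple_graph_def by blast
  ultimately show ?thesis
    using later[of j i] later[of i j] assms(3,4) unfolding threshold_adj_def
    by (cases i j rule: linorder_cases) auto
qed

definition bzp_prefix_sum :: "nat \<Rightarrow> (nat \<Rightarrow> bool) \<Rightarrow> nat \<Rightarrow> nat" where
  "bzp_prefix_sum n a k = (\<Sum>i | i < k \<and> \<not> a i. bzp n a i)"

lemma bzp_pos: "i < k \<Longrightarrow> k < n \<Longrightarrow> a k \<Longrightarrow> bzp n a i > 0"
  unfolding bzp_def by (subst card_gt_0_iff) auto

lemma bzp_prefix_sum_le_bzp_sum: "k \<le> n \<Longrightarrow> bzp_prefix_sum n a k \<le> bzp_sum n a"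
  unfolding bzp_prefix_sum_def bzp_sum_def by (intro sum_mono2) auto

lemma sum_bzp_prefix_sum: "(\<Sum>k | k < n \<and> a k. bzp_prefix_sum n a k) = bzp_F1 n a"
proof -
  let ?T = "{k. k < n \<and> a k}" and ?Z = "{i. i < n \<and> \<not> a i}"
  have "(\<Sum>k\<in>?T. bzp_prefix_sum n a k) = (\<Sum>k\<in>?T. \<Sum>i | i \<in> ?Z \<and> i < k. bzp n a i)"
    unfolding bzp_prefix_sum_def by (intro sum.cong refl arg_cong2[where f=sum]) auto
  also have "\<dots> = (\<Sum>i\<in>?Z. \<Sum>k | k \<in> ?T \<and> i < k. bzp n a i)"
    by (rule sum.swap_restrict) auto
  also have "\<dots> = (\<Sum>i\<in>?Z. bzp n a i * card {k. k \<in> ?T \<and> i < k})"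
    by (simp add: mult.commute)
  also have "\<dots> = bzp_F1 n a"
    unfolding bzp_F1_def bzp_def power2_eq_square
    by (intro sum.cong refl arg_cong2[where f="(*)"] arg_cong[where f=card]) auto
  finally show ?thesis .
qed

definition type1_weight :: "nat \<Rightarrow> (nat \<Rightarrow> bool) \<Rightarrow> real \<Rightarrow> nat \<Rightarrow> real" where
  "type1_weight n a \<beta> k = 1 + \<beta> * real (bzp_prefix_sum n a k)"

definition threshold_weight :: "nat \<Rightarrow> (nat \<Rightarrow> bool) \<Rightarrow> real \<Rightarrow> real \<Rightarrow> nat \<Rightarrow> real" where
  "threshold_weight n a t \<beta> i =
     (if a i then type1_weight n a \<beta> i
      else if bzp n a i = 0 then 1 \<comment> \<open>an isolated vertex: any positive weight will do\<close>
      else (\<Sum>j | i < j \<and> j < n \<and> a j. type1_weight n a \<beta> j) / t)"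

lemma type1_weight_ge_1: "\<beta> \<ge> 0 \<Longrightarrow> 1 \<le> type1_weight n a \<beta> k"
  unfolding type1_weight_def by simp

lemma later_type1_weight_sum_bounds:
  assumes "\<beta> \<ge> 0"
  shows "real (bzp n a i) \<le> (\<Sum>j | i < j \<and> j < n \<and> a j. type1_weight n a \<beta> j)"
    and "(\<Sum>j | i < j \<and> j < n \<and> a j. type1_weight n a \<beta> j)
           \<le> real (bzp n a i) * (1 + \<beta> * real (bzp_sum n a))"
proof -
  show "real (bzp n a i) \<le> (\<Sum>j | i < j \<and> j < n \<and> a j. type1_weight n a \<beta> j)"
    unfolding bzp_def
    by (rule sum_bounded_below[where K=1, simplified]) (rule type1_weight_ge_1[OF assms])
  have "type1_weight n a \<beta> j \<le> 1 + \<beta> * real (bzp_sum n a)" if "j < n" for j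
    using assms bzp_prefix_sum_le_bzp_sum[of j n a] that
    unfolding type1_weight_def by (simp add: mult_left_mono)
  then show "(\<Sum>j | i < j \<and> j < n \<and> a j. type1_weight n a \<beta> j)
               \<le> real (bzp n a i) * (1 + \<beta> * real (bzp_sum n a))"
    unfolding bzp_def by (rule sum_bounded_above) simp
qed

lemma threshold_weight_pos:
  assumes "t > 0" "\<beta> \<ge> 0"
  shows "threshold_weight n a t \<beta> i > 0"
  using assms later_type1_weight_sum_bounds(1)[OF assms(2), of n a i]
    type1_weight_ge_1[OF assms(2), of n a i]
  unfolding threshold_weight_def by auto

lemma threshold_weight_row_type0:
  assumes "\<not> a k" "t > 0"
  shows "(\<Sum>j | j < n \<and> threshold_adj a k j. threshold_weight n a t \<beta> j)
           \<le> t * threshold_weight n a t \<beta> k"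
proof -
  have "{j. j < n \<and> threshold_adj a k j} = {j. k < j \<and> j < n \<and> a j}"
    using assms(1) unfolding threshold_adj_def by auto
  then have "(\<Sum>j | j < n \<and> threshold_adj a k j. threshold_weight n a t \<beta> j)
               = (\<Sum>j | k < j \<and> j < n \<and> a j. type1_weight n a \<beta> j)"
    unfolding threshold_weight_def by (intro sum.cong) auto
  moreover have "{j. k < j \<and> j < n \<and> a j} = {}" if "bzp n a k = 0"
    using that unfolding bzp_def by simp
  ultimately show ?thesis
    using assms unfolding threshold_weight_def by (cases "bzp n a k = 0") auto
qed

lemma threshold_weight_row_type1:
  assumes k: "a k" "k < n" and t: "t > 0" and \<beta>: "\<beta> \<ge> 0"
    and type1_total: "real (type1_count n a) + \<beta> * real (bzp_F1 n a) \<le> t + 1"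
    and type0_scale: "1 + \<beta> * real (bzp_sum n a) = \<beta> * t * (t + 1)"
  shows "(\<Sum>j | j < n \<and> threshold_adj a k j. threshold_weight n a t \<beta> j)
           \<le> t * threshold_weight n a t \<beta> k"
proof -
  let ?W = "threshold_weight n a t \<beta>" and ?U = "type1_weight n a \<beta>"
  let ?T = "{j. j < n \<and> a j}" and ?P = "{j. j < k \<and> \<not> a j}"
  have "(\<Sum>j\<in>?T. ?W j) = (\<Sum>j\<in>?T. 1 + \<beta> * real (bzp_prefix_sum n a j))"
    unfolding threshold_weight_def type1_weight_def by (intro sum.cong) auto
  also have "\<dots> = real (type1_count n a) + \<beta> * real (bzp_F1 n a)"
    unfolding sum.distrib sum_distrib_left[symmetric] of_nat_sum[symmetric]
      sum_bzp_prefix_sum type1_count_def by simp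
  finally have sum_T: "(\<Sum>j\<in>?T - {k}. ?W j) \<le> t + 1 - ?U k"
    using type1_total k by (simp add: sum_diff1 threshold_weight_def)
  have "?W j \<le> real (bzp n a j) * (\<beta> * (t + 1))" if "j \<in> ?P" for j
  proof -
    have "bzp n a j > 0" using bzp_pos[of j k n a] that k by simp
    then have "?W j = (\<Sum>i | j < i \<and> i < n \<and> a i. ?U i) / t"
      using that unfolding threshold_weight_def by simp
    also have "\<dots> \<le> real (bzp n a j) * (1 + \<beta> * real (bzp_sum n a)) / t"
      using later_type1_weight_sum_bounds(2)[OF \<beta>] t by (simp add: divide_right_mono)
    also have "\<dots> = real (bzp n a j) * (\<beta> * (t + 1))"
      using type0_scale t by (simp add: field_simps)
    finally show ?thesis .
  qed
  then have "(\<Sum>j\<in>?P. ?W j) \<le> (\<Sum>j\<in>?P. real (bzp n a j) * (\<beta> * (t + 1)))"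
    by (rule sum_mono)
  also have "\<dots> = real (bzp_prefix_sum n a k) * (\<beta> * (t + 1))"
    unfolding bzp_prefix_sum_def by (simp add: sum_distrib_right)
  finally have sum_P: "(\<Sum>j\<in>?P. ?W j) \<le> real (bzp_prefix_sum n a k) * (\<beta> * (t + 1))" .
  have "{j. j < n \<and> threshold_adj a k j} = (?T - {k}) \<union> ?P"
    using k unfolding threshold_adj_def by auto
  then have "(\<Sum>j | j < n \<and> threshold_adj a k j. ?W j) = (\<Sum>j\<in>?T - {k}. ?W j) + (\<Sum>j\<in>?P. ?W j)"
    by (simp; intro sum.union_disjoint) auto
  also have "\<dots> \<le> t + 1 - ?U k + real (bzp_prefix_sum n a k) * (\<beta> * (t + 1))"
    using sum_T sum_P by simp
  also have "\<dots> = t * ?W k"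
    using k unfolding threshold_weight_def type1_weight_def by (simp add: algebra_simps)
  finally show ?thesis .
qed

lemma spectral_radius_threshold_graph_le:
  assumes "simple_graph n E" "threshold_order n E v a" "n > 0"
    and "t > 0" "\<beta> \<ge> 0"
    and "real (type1_count n a) + \<beta> * real (bzp_F1 n a) \<le> t + 1"
    and "1 + \<beta> * real (bzp_sum n a) = \<beta> * t * (t + 1)"
  shows "spectral_radius (adj_matrix n E) \<le> t"
proof (rule spectral_radius_adj_matrix_le_relabel)
  show "bij_betw v {..<n} {..<n}"
    using assms(2) unfolding threshold_order_def atLeast0LessThan by simp
  show "E (v i) (v j) = threshold_adj a i j" if "i < n" "j < n" for i j
    using threshold_order_adj[OF assms(1,2) that] .
  show "threshold_weight n a t \<beta> i > 0" for i
    using threshold_weight_pos[OF assms(4,5)] .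
  show "(\<Sum>j | j < n \<and> threshold_adj a i j. threshold_weight n a t \<beta> j)
          \<le> t * threshold_weight n a t \<beta> i" if "i < n" for i
    using threshold_weight_row_type0[OF _ assms(4)] threshold_weight_row_type1[OF _ that assms(4-7)]
    by (cases "a i") auto
qed (use assms(3) in auto)

lemma greatest_real_root_ge:
  fixes p :: "real poly"
  assumes lc: "lead_coeff p > 0" and "poly p x \<le> 0"
  shows "x \<le> greatest_real_root p"
proof -
  obtain N where N: "\<And>y. y \<ge> N \<Longrightarrow> poly p y \<ge> lead_coeff p"
    using poly_pinfty_gt_lc[OF lc] by auto
  obtain r where r: "x \<le> r" "poly p r = 0"
  proof (cases "poly p x = 0")
    case False
    then have "poly p x < 0" "poly p (max N (x + 1)) > 0"
      using assms N[of "max N (x + 1)"] by auto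
    then obtain r where "x < r" "poly p r = 0"
      using poly_IVT_pos[of x "max N (x + 1)" p] by (auto simp: less_max_iff_disj)
    then show ?thesis using that less_imp_le by blast
  qed (use that in auto)
  have "p \<noteq> 0" using lc by auto
  then show ?thesis
    using r poly_roots_finite[of p] unfolding greatest_real_root_def
    by (intro order.trans[OF r(1)] Max_ge) auto
qed

lemma poly_thr_cubic:
  "poly (thr_cubic n a) x
     = (x - real (type1_count n a)) * (x^2 - x - real (bzp_sum n a)) - real (bzp_F1 n a)"
  unfolding thr_cubic_def Let_def by (simp add: algebra_simps power2_eq_square power3_eq_cube)

lemma lead_coeff_thr_cubic: "lead_coeff (thr_cubic n a) = 1"
  unfolding thr_cubic_def Let_def by simp

lemma above_greatest_real_root_thr_cubic:
  assumes "greatest_real_root (thr_cubic n a) < x"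
  shows "1 < x" "real (bzp_sum n a) < x^2 - x" "0 < poly (thr_cubic n a) x"
proof -
  let ?s = "real (bzp_sum n a)"
  define y where "y = (1 + sqrt (1 + 4 * ?s)) / 2"
  have "y \<ge> 1" unfolding y_def by simp
  have "(sqrt (1 + 4 * ?s))^2 = 1 + 4 * ?s" by simp
  then have y_root: "y^2 - y = ?s" unfolding y_def by (simp add: power2_eq_square algebra_simps)
  then have "poly (thr_cubic n a) y \<le> 0" unfolding poly_thr_cubic by simp
  then have "y < x"
    using greatest_real_root_ge[of "thr_cubic n a" y] assms by (simp add: lead_coeff_thr_cubic)
  then show "1 < x" using \<open>y \<ge> 1\<close> by simp
  have "x^2 - x - ?s = (x - y) * (x + y - 1)"
    using y_root by (simp add: algebra_simps power2_eq_square)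
  moreover have "(x - y) * (x + y - 1) > 0"
    using \<open>y < x\<close> \<open>y \<ge> 1\<close> by simp
  ultimately show "?s < x^2 - x" by simp
  show "0 < poly (thr_cubic n a) x"
    using greatest_real_root_ge[of "thr_cubic n a" x] assms by (force simp: lead_coeff_thr_cubic)
qed

lemma spectral_radius_threshold_graph_le_cubic:
  assumes "simple_graph n E" "threshold_order n E v a" "n > 0"
    and "greatest_real_root (thr_cubic n a) < x"
  shows "spectral_radius (adj_matrix n E) \<le> x - 1"
proof (rule spectral_radius_threshold_graph_le[OF assms(1-3)])
  let ?c = "real (type1_count n a)" and ?s = "real (bzp_sum n a)" and ?f = "real (bzp_F1 n a)"
  define D where "D = x^2 - x - ?s"
  define \<beta> where "\<beta> = 1 / D"
  note x = above_greatest_real_root_thr_cubic[OF assms(4)]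
  have "D > 0" using x(2) unfolding D_def by simp
  show "x - 1 > 0" "\<beta> \<ge> 0" using x(1) \<open>D > 0\<close> unfolding \<beta>_def by auto
  have "?f \<le> (x - ?c) * D"
    using x(3) unfolding poly_thr_cubic D_def by simp
  then have "\<beta> * ?f \<le> x - ?c"
    using \<open>D > 0\<close> unfolding \<beta>_def by (simp add: pos_divide_le_eq mult.commute)
  then show "?c + \<beta> * ?f \<le> x - 1 + 1" by simp
  have "\<beta> * D = 1" using \<open>D > 0\<close> unfolding \<beta>_def by simp
  then show "1 + \<beta> * ?s = \<beta> * (x - 1) * (x - 1 + 1)"
    unfolding D_def by (simp add: algebra_simps power2_eq_square)
qed

theorem theorem5p1:
  fixes n :: nat and E :: "nat \<Rightarrow> nat \<Rightarrow> bool" and v :: "nat \<Rightarrow> nat" and a :: "nat \<Rightarrow> bool"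
  assumes "simple_graph n E"
    and "threshold_order n E v a"
    and "graph_connected n E"
    and "n \<ge> 4"
    and "n - 1 < graph_size n E" and "graph_size n E < n choose 2"
  shows "greatest_real_root (thr_cubic n a) \<ge> 1 + spectral_radius (adj_matrix n E)"
proof (rule dense_ge)
  fix x assume "greatest_real_root (thr_cubic n a) < x"
  moreover have "n > 0" using assms(4) by simp
  ultimately show "1 + spectral_radius (adj_matrix n E) \<le> x"
    using spectral_radius_threshold_graph_le_cubic[OF assms(1,2)] by fastforce
qed

end
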